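(* Let $R$ be a quotient root system, let $\Phi\subseteq R^+$ be an inversion set, and suppose $\Phi = \Phi_1 \sqcup \Phi_2$ with $\Phi_1,\Phi_2$ disjoint inversion sets. If $C$ is a connected component of $G_\Phi^{\Phi^c}$, then $C \subseteq \Phi_1$ or $C \subseteq \Phi_2$.
   Context: A quotient root system (QRS) $R$ is the set of non-zero images of a root system $\Delta$ (with base $\Sigma$) under the orthogonal projection of its ambient Euclidean space onto $(\mathrm{span}\,J)^\perp$ for some $J\subsetneq\Sigma$; its base consists of the images of $\Sigma\setminus J$, and every root is an integer combination of the base with all coefficients $\ge0$ (positive roots, $R^+$) or all $\le0$. A subset $\Phi\subseteq R^+$ is closed if $\alpha,\beta\in\Phi$, $\alpha+\beta\in R$ imply $\alpha+\beta\in\Phi$; co-closed if $\Phi^c:=R^+\setminus\Phi$ is closed; an inversion set if both. $G_\Phi^{\Phi^c}$ is the graph with vertex set $\Phi$ where $\alpha,\alpha'$ are adjacent iff $\alpha-\alpha'\in\Phi^c\cup(-\Phi^c)$. *)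

theory Defs
  imports "HOL-Analysis.Analysis"
begin

definition root_system :: "'a::euclidean_space set \<Rightarrow> bool" where
  "root_system \<Delta> \<longleftrightarrow>
     finite \<Delta> \<and> 0 \<notin> \<Delta> \<and> span \<Delta> = UNIV \<and>
     (\<forall>\<alpha>\<in>\<Delta>. \<forall>\<beta>\<in>\<Delta>. \<beta> - (2 * (\<beta> \<bullet> \<alpha>) / (\<alpha> \<bullet> \<alpha>)) *\<^sub>R \<alpha> \<in> \<Delta>) \<and>
     (\<forall>\<alpha>\<in>\<Delta>. \<forall>\<beta>\<in>\<Delta>. 2 * (\<beta> \<bullet> \<alpha>) / (\<alpha> \<bullet> \<alpha>) \<in> \<int>) \<and>
     (\<forall>\<alpha>\<in>\<Delta>. \<forall>c::real. c *\<^sub>R \<alpha> \<in> \<Delta> \<longrightarrow> c = 1 \<or> c = -1)"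

definition is_base :: "'a::euclidean_space set \<Rightarrow> 'a set \<Rightarrow> bool" where
  "is_base \<Delta> \<Sigma> \<longleftrightarrow>
     \<Sigma> \<subseteq> \<Delta> \<and> independent \<Sigma> \<and>
     (\<forall>\<alpha>\<in>\<Delta>. \<exists>c::'a \<Rightarrow> real. (\<forall>\<sigma>\<in>\<Sigma>. c \<sigma> \<in> \<int>) \<and>
        \<alpha> = (\<Sum>\<sigma>\<in>\<Sigma>. c \<sigma> *\<^sub>R \<sigma>) \<and>
        ((\<forall>\<sigma>\<in>\<Sigma>. c \<sigma> \<ge> 0) \<or> (\<forall>\<sigma>\<in>\<Sigma>. c \<sigma> \<le> 0)))"

definition qproj :: "'a::euclidean_space set \<Rightarrow> 'a \<Rightarrow> 'a" where
  "qproj J v = (THE w. w \<in> orthogonal_comp (span J) \<and> v - w \<in> span J)"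

definition qrs :: "'a::euclidean_space set \<Rightarrow> 'a set \<Rightarrow> 'a set" where
  "qrs \<Delta> J = qproj J ` \<Delta> - {0}"

definition qrs_pos :: "'a::euclidean_space set \<Rightarrow> 'a set \<Rightarrow> 'a set \<Rightarrow> 'a set" where
  "qrs_pos \<Delta> \<Sigma> J = {\<beta> \<in> qrs \<Delta> J. \<exists>c::'a \<Rightarrow> real.
      (\<forall>\<sigma>\<in>\<Sigma> - J. c \<sigma> \<in> \<int> \<and> c \<sigma> \<ge> 0) \<and> \<beta> = (\<Sum>\<sigma>\<in>\<Sigma> - J. c \<sigma> *\<^sub>R qproj J \<sigma>)}"

definition closed_in_rs :: "'a::real_vector set \<Rightarrow> 'a set \<Rightarrow> bool" where
  "closed_in_rs R \<Phi> \<longleftrightarrow> (\<forall>\<alpha>\<in>\<Phi>. \<forall>\<beta>\<in>\<Phi>. \<alpha> + \<beta> \<in> R \<longrightarrow> \<alpha> + \<beta> \<in> \<Phi>)"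

definition inversion_set :: "'a::real_vector set \<Rightarrow> 'a set \<Rightarrow> 'a set \<Rightarrow> bool" where
  "inversion_set R Rpos \<Phi> \<longleftrightarrow> \<Phi> \<subseteq> Rpos \<and> closed_in_rs R \<Phi> \<and> closed_in_rs R (Rpos - \<Phi>)"

text \<open>Adjacency in the graph G_\<Phi>^{\<Phi>^c} (vertex set \<Phi>).\<close>
definition G_adj :: "'a::real_vector set \<Rightarrow> 'a set \<Rightarrow> 'a \<Rightarrow> 'a \<Rightarrow> bool" where
  "G_adj Rpos \<Phi> \<alpha> \<alpha>' \<longleftrightarrow> \<alpha> \<in> \<Phi> \<and> \<alpha>' \<in> \<Phi> \<and>
     (\<alpha> - \<alpha>' \<in> Rpos - \<Phi> \<or> \<alpha> - \<alpha>' \<in> uminus ` (Rpos - \<Phi>))"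

definition G_component :: "'a::real_vector set \<Rightarrow> 'a set \<Rightarrow> 'a set \<Rightarrow> bool" where
  "G_component Rpos \<Phi> C \<longleftrightarrow> (\<exists>\<alpha>\<in>\<Phi>. C = {\<beta>. (G_adj Rpos \<Phi>)\<^sup>*\<^sup>* \<alpha> \<beta>})"

end

theory Submission
  imports Defs
begin

(* An edge of the graph joins \<alpha> and \<alpha> + \<gamma> with \<gamma> \<in> R\<^sup>+ - \<Phi>. If \<alpha> \<in> \<Phi>\<^sub>2, then \<alpha> and \<gamma>
  both lie in R\<^sup>+ - \<Phi>\<^sub>1, hence so does the root \<alpha> + \<gamma> by co-closedness of \<Phi>\<^sub>1, i.e.
  \<alpha> + \<gamma> \<in> \<Phi>\<^sub>2; symmetrically for \<Phi>\<^sub>1. So membership in each part is constant along edges,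
  hence on components. *)

lemma qrs_pos_subset_qrs: "qrs_pos \<Delta> \<Sigma> J \<subseteq> qrs \<Delta> J"
  by (auto simp: qrs_pos_def)

lemma inversion_set_partition_add:
  assumes "Rpos \<subseteq> R" and "inversion_set R Rpos P1" and "P1 \<inter> P2 = {}"
    and "P2 \<subseteq> Rpos" and "a \<in> P2" and "g \<in> Rpos - (P1 \<union> P2)" and "a + g \<in> P1 \<union> P2"
  shows "a + g \<in> P2"
proof -
  have "P1 \<subseteq> Rpos" and co_closed: "closed_in_rs R (Rpos - P1)"
    using assms(2) by (auto simp: inversion_set_def)
  have "a \<in> Rpos - P1" and "g \<in> Rpos - P1" using assms by auto
  moreover have "a + g \<in> R" using assms(1,4,7) \<open>P1 \<subseteq> Rpos\<close> by auto
  ultimately have "a + g \<in> Rpos - P1" using co_closed by (auto simp: closed_in_rs_def)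
  then show ?thesis using assms(7) by blast
qed

lemma G_adj_partition_iff:
  assumes "Rpos \<subseteq> R" and inv1: "inversion_set R Rpos P1" and inv2: "inversion_set R Rpos P2"
    and disj: "P1 \<inter> P2 = {}" and adj: "G_adj Rpos (P1 \<union> P2) x y"
  shows "x \<in> P1 \<longleftrightarrow> y \<in> P1"
proof -
  obtain g where g: "g \<in> Rpos - (P1 \<union> P2)" and "y = x + g \<or> x = y + g"
    using adj by (force simp: G_adj_def algebra_simps)
  have sub: "P1 \<subseteq> Rpos" "P2 \<subseteq> Rpos"
    using inv1 inv2 by (auto simp: inversion_set_def)
  have step: "a \<in> P1 \<longleftrightarrow> a + g \<in> P1" if "a \<in> P1 \<union> P2" "a + g \<in> P1 \<union> P2" for a
  proof -
    have "a \<in> P2 \<Longrightarrow> a + g \<in> P2"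
      using inversion_set_partition_add[OF assms(1) inv1 disj sub(2) _ g] that by blast
    moreover have "a \<in> P1 \<Longrightarrow> a + g \<in> P1"
      using inversion_set_partition_add[OF assms(1) inv2 _ sub(1), of a g] g that disj
      by (simp add: Un_commute Int_commute)
    ultimately show ?thesis using that disj by blast
  qed
  have "x \<in> P1 \<union> P2" "y \<in> P1 \<union> P2" using adj by (auto simp: G_adj_def)
  with \<open>y = x + g \<or> x = y + g\<close> show ?thesis
    using step[of x] step[of y] by auto
qed

lemma rtranclp_G_adj_partition_iff:
  assumes "Rpos \<subseteq> R" and "inversion_set R Rpos P1" and "inversion_set R Rpos P2"
    and "P1 \<inter> P2 = {}" and "(G_adj Rpos (P1 \<union> P2))\<^sup>*\<^sup>* x y"
  shows "x \<in> P1 \<longleftrightarrow> y \<in> P1"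
  using assms(5)
proof (induction rule: rtranclp_induct)
  case base
  then show ?case by simp
next
  case (step y z)
  then show ?case using G_adj_partition_iff[OF assms(1-4)] by blast
qed

lemma G_component_subset:
  assumes "G_component Rpos P C"
  shows "C \<subseteq> P"
proof
  fix \<beta> assume "\<beta> \<in> C"
  with assms obtain \<alpha> where "(G_adj Rpos P)\<^sup>*\<^sup>* \<alpha> \<beta>" and "\<alpha> \<in> P"
    by (auto simp: G_component_def)
  then show "\<beta> \<in> P"
    by (induction rule: rtranclp_induct) (auto simp: G_adj_def)
qed

theorem proposition4p2:
  fixes \<Delta> \<Sigma> J \<Phi> \<Phi>1 \<Phi>2 C :: "'a::euclidean_space set"
  assumes "root_system \<Delta>"
    and "is_base \<Delta> \<Sigma>"
    and "J \<subset> \<Sigma>"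
    and "inversion_set (qrs \<Delta> J) (qrs_pos \<Delta> \<Sigma> J) \<Phi>"
    and "inversion_set (qrs \<Delta> J) (qrs_pos \<Delta> \<Sigma> J) \<Phi>1"
    and "inversion_set (qrs \<Delta> J) (qrs_pos \<Delta> \<Sigma> J) \<Phi>2"
    and "\<Phi>1 \<inter> \<Phi>2 = {}"
    and "\<Phi> = \<Phi>1 \<union> \<Phi>2"
    and "G_component (qrs_pos \<Delta> \<Sigma> J) \<Phi> C"
  shows "C \<subseteq> \<Phi>1 \<or> C \<subseteq> \<Phi>2"
proof -
  obtain \<alpha> where "\<alpha> \<in> \<Phi>" and C: "C = {\<beta>. (G_adj (qrs_pos \<Delta> \<Sigma> J) \<Phi>)\<^sup>*\<^sup>* \<alpha> \<beta>}"
    using assms(9) by (auto simp: G_component_def)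
  have "\<beta> \<in> \<Phi>1 \<longleftrightarrow> \<alpha> \<in> \<Phi>1" if "\<beta> \<in> C" for \<beta>
    using rtranclp_G_adj_partition_iff[OF qrs_pos_subset_qrs assms(5-7)] that
    unfolding C assms(8) by blast
  moreover have "C \<subseteq> \<Phi>1 \<union> \<Phi>2"
    using G_component_subset[OF assms(9)] assms(8) by simp
  ultimately show ?thesis by blast
qed

end
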